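(* Goldfish (the propose-vote-merge protocol with fork-choice $\mathrm{GHOST}_{eph}$, without subsampling) is not $(\tau,\pi)$-asynchrony-resilient for any $\tau>\pi\ge2$.
   Context: Setting. There are $n$ validators; a probabilistic polynomial-time adversary adaptively corrupts validators (permanently; corrupted validators behave arbitrarily) and adaptively decides which honest validators are awake or asleep. Rounds, synchronized clocks; slot $t$ = rounds $3\Delta t,\dots,3\Delta t+3\Delta-1$. Under synchrony, messages of honest validators reach all awake honest validators within $\Delta$ rounds; asleep validators receive queued messages upon waking. An honest validator waking up at a round in $(3\Delta(t-1)+2\Delta,3\Delta t+2\Delta]$ buffers messages and becomes active at round $3\Delta t+2\Delta$. Each slot has a unique proposer (single secret leader election, each validator chosen with probability $1/n$). $H_t$ = honest validators active at round $3\Delta t+\Delta$, $A_t$ = adversarial validators at round $3\Delta t+\Delta$, $H_{s,t}=\bigcup_{i=s}^tH_i$ ($H_i=\emptyset$ for $i<0$). An honest proposal from slot $t$ is the block of an honest proposer active at round $3\Delta t$. Fork-choice $\mathrm{GHOST}_{eph}(\mathcal V,t)$: remove from the view $\mathcal V$ all votes of validators with two different votes for the same slot, then remove all votes from slots $<t-1$, then run GHOST: starting at genesis, repeatedly move to the child with most remaining votes for it or its descendants (deterministic tie-break) until a leaf, which is output. Propose-vote-merge protocol with fork-choice $\mathrm{FC}$ (every validator votes every slot): each validator keeps a view, a buffer collecting received blocks/votes and a canonical chain; at round $3\Delta t$ the proposer merges its buffer into its view $\mathcal V_p$, creates a block $B$ with parent $\mathrm{FC}(\mathcal V_p,t)$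 and gossips it with the view $\mathcal V_p\cup\{B\}$ (during the first $\Delta$ rounds of the slot); a validator receiving this proposal during rounds $[3\Delta t,3\Delta t+\Delta]$ merges the proposed view into its own; at round $3\Delta t+\Delta$ every active validator sets its canonical chain to $\mathrm{FC}(\mathcal V_i,t)$ and gossips a slot-$t$ vote for it; at round $3\Delta t+2\Delta$ every validator merges its buffer into its view. Definitions. $\tau$-sleepiness at slot $t$: $|H_{t-1}|>|A_t\cup(H_{t-\tau,t-2}\setminus H_{t-1})|$. A temporary period of asynchrony (TPA) is an interval $(t_1,t_2)$ of consecutive slots in which synchrony does not hold; it is a $\pi$-TPA if $t_2-t_1\le\pi$. We consider a network that is synchronous except during one TPA. For $\tau>\pi$ (or $\tau=\pi=\infty$) an execution is $(\tau,\pi)$-compliant if its TPA is a $\pi$-TPA $(t_1,t_2)$ and: $\tau$-sleepiness holds at every slot $t\notin(t_1,t_2]$; $|H_{t_1}\setminus A_t|>|A_t\cup(H_{t-\tau,t-1}\setminus H_{t_1})|$ for every $t\in(t_1,t_2+1]$; and all validators of $H_{t_1}$ are awake at round $3\Delta t_1+2\Delta$. A validator is aware at a round $r$ in slots $(t_1,t_2]$ if it is active at $r$ and belongs to $H_{t_1}$; at other rounds it is aware if it is active. An execution satisfies asynchrony resilience if every honest proposal from a slot $t\le t_1$ is in the canonical chain of every aware validator at every round $\ge3\Delta t+\Delta$. A protocol is $(\tau,\pi)$-asynchrony-resilient if all $(\tau,\pi)$-compliant executions satisfy asynchrony resilience. *)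

theory Defs
  imports Main "HOL-Library.Sublist"
begin

text \<open>A block is identified by its full chain from genesis: a list of entries
  (slot, nonce).  Genesis is the empty list; the parent of b @ [e] is b.
  Honest proposers use nonce 0; the nonce lets a corrupted proposer equivocate.\<close>
type_synonym blk = "(nat \<times> nat) list"

text \<open>Basic messages: blocks and votes (Vt validator slot block).\<close>
datatype bmsg = Blk blk | Vt nat nat blk

text \<open>Gossiped messages: basic messages, or a proposal = block together with a view.\<close>
datatype msg = Basic bmsg | Prop blk "bmsg set"

fun content :: "msg \<Rightarrow> bmsg set" where
  "content (Basic m) = {m}"
| "content (Prop b W) = insert (Blk b) W"

definition votes :: "bmsg set \<Rightarrow> (nat \<times> nat \<times> blk) set" where
  "votes V = {(u, s, b). Vt u s b \<in> V}"

definition equivocators :: "bmsg set \<Rightarrow> nat set" where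
  "equivocators V = {u. \<exists>s b b'. (u, s, b) \<in> votes V \<and> (u, s, b') \<in> votes V \<and> b \<noteq> b'}"

definition eph_votes :: "bmsg set \<Rightarrow> nat \<Rightarrow> (nat \<times> nat \<times> blk) set" where
  "eph_votes V t = {(u, s, b). (u, s, b) \<in> votes V \<and> u \<notin> equivocators V \<and> t \<le> Suc s}"

definition block_tree :: "bmsg set \<Rightarrow> blk set" where
  "block_tree V = insert [] {b. \<exists>b'. Blk b' \<in> V \<and> prefix b b'}"

definition weight :: "bmsg set \<Rightarrow> nat \<Rightarrow> blk \<Rightarrow> nat" where
  "weight V t b = card {(u, s, c). (u, s, c) \<in> eph_votes V t \<and> prefix b c}"

definition children :: "bmsg set \<Rightarrow> blk \<Rightarrow> blk set" where
  "children V c = {b \<in> block_tree V. \<exists>x. b = c @ [x]}"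

definition heaviest :: "bmsg set \<Rightarrow> nat \<Rightarrow> blk \<Rightarrow> blk set" where
  "heaviest V t c = {b \<in> children V c. \<forall>b' \<in> children V c. weight V t b' \<le> weight V t b}"

text \<open>tb is the deterministic tie-breaking rule (choice among the heaviest children).\<close>
fun ghost_walk :: "(blk set \<Rightarrow> blk) \<Rightarrow> bmsg set \<Rightarrow> nat \<Rightarrow> nat \<Rightarrow> blk \<Rightarrow> blk" where
  "ghost_walk tb V t 0 c = c"
| "ghost_walk tb V t (Suc f) c =
     (if children V c = {} then c else ghost_walk tb V t f (tb (heaviest V t c)))"

definition ghost_eph :: "(blk set \<Rightarrow> blk) \<Rightarrow> bmsg set \<Rightarrow> nat \<Rightarrow> blk" where
  "ghost_eph tb V t = ghost_walk tb V t (card (block_tree V)) []"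

record hst =
  hview :: "bmsg set"
  hbuf :: "bmsg set"
  hchain :: "blk option"   \<comment> \<open>canonical chain; None while not active / not yet set since becoming active\<close>

definition hinit :: hst where
  "hinit = \<lparr>hview = {}, hbuf = {}, hchain = None\<rparr>"

definition is_prop_slot :: "nat \<Rightarrow> msg \<Rightarrow> bool" where
  "is_prop_slot t m = (\<exists>b W. m = Prop b W \<and> b \<noteq> [] \<and> fst (last b) = t)"

text \<open>One round r of honest validator v: given whether v is active at r and the set M of
  messages received at r, returns the new state and the messages gossiped at r.
  Incoming messages are processed first, then the scheduled action of the round.\<close>
definition hstep :: "nat \<Rightarrow> (blk set \<Rightarrow> blk) \<Rightarrow> (nat \<Rightarrow> nat) \<Rightarrow> nat \<Rightarrow> bool \<Rightarrow> nat
                      \<Rightarrow> msg set \<Rightarrow> hst \<Rightarrow> hst \<times> msg set" where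
  "hstep \<Delta> tb ld v a r M s =
    (let t = r div (3 * \<Delta>); k = r mod (3 * \<Delta>) in
     if \<not> a then (\<lparr>hview = hview s, hbuf = hbuf s \<union> \<Union> (content ` M), hchain = None\<rparr>, {})
     else
       (let P = (if k \<le> \<Delta> then {m \<in> M. is_prop_slot t m} else {});
            V1 = hview s \<union> \<Union> (content ` P);
            B1 = hbuf s \<union> \<Union> (content ` (M - P))
        in if k = 0 \<and> ld t = v then
             (let b = ghost_eph tb (V1 \<union> B1) t @ [(t, 0)];
                  V2 = insert (Blk b) (V1 \<union> B1)
              in (\<lparr>hview = V2, hbuf = {}, hchain = hchain s\<rparr>, {Prop b V2}))
           else if k = \<Delta> then
             (let c = ghost_eph tb V1 t
              in (\<lparr>hview = V1, hbuf = B1, hchain = Some c\<rparr>, {Basic (Vt v t c)}))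
           else if k = 2 * \<Delta> then
             (\<lparr>hview = V1 \<union> B1, hbuf = {}, hchain = hchain s\<rparr>, {})
           else (\<lparr>hview = V1, hbuf = B1, hchain = hchain s\<rparr>, {})))"

fun hrun :: "nat \<Rightarrow> (blk set \<Rightarrow> blk) \<Rightarrow> (nat \<Rightarrow> nat) \<Rightarrow> (nat \<Rightarrow> bool) \<Rightarrow> (nat \<Rightarrow> msg set)
              \<Rightarrow> nat \<Rightarrow> nat \<Rightarrow> hst \<times> msg set" where
  "hrun \<Delta> tb ld act rv v 0 = hstep \<Delta> tb ld v (act 0) 0 (rv 0) hinit"
| "hrun \<Delta> tb ld act rv v (Suc r) =
     hstep \<Delta> tb ld v (act (Suc r)) (Suc r) (rv (Suc r)) (fst (hrun \<Delta> tb ld act rv v r))"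

record exec =
  lead :: "nat \<Rightarrow> nat"            \<comment> \<open>proposer of each slot\<close>
  corr :: "nat \<Rightarrow> nat option"     \<comment> \<open>round at which a validator is corrupted (permanently)\<close>
  awake :: "nat \<Rightarrow> nat \<Rightarrow> bool"
  sent :: "nat \<Rightarrow> nat \<Rightarrow> msg set"  \<comment> \<open>messages gossiped by v at round r\<close>
  recv :: "nat \<Rightarrow> nat \<Rightarrow> msg set"  \<comment> \<open>messages delivered to v at round r\<close>

definition adv_at :: "exec \<Rightarrow> nat \<Rightarrow> nat \<Rightarrow> nat set" where
  "adv_at E n r = {v. v < n \<and> (\<exists>c. corr E v = Some c \<and> c \<le> r)}"

definition honest_at :: "exec \<Rightarrow> nat \<Rightarrow> nat \<Rightarrow> nat \<Rightarrow> bool" where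
  "honest_at E n v r = (v < n \<and> v \<notin> adv_at E n r)"

definition active :: "nat \<Rightarrow> exec \<Rightarrow> nat \<Rightarrow> nat \<Rightarrow> bool" where
  "active \<Delta> E v r =
    (\<exists>w \<le> r. (\<forall>r' \<in> {w..r}. awake E v r') \<and>
       (w = 0 \<or> (\<not> awake E v (w - 1) \<and> (\<exists>t. w \<le> 3*\<Delta>*t + 2*\<Delta> \<and> 3*\<Delta>*t + 2*\<Delta> \<le> r))))"

definition hist :: "exec \<Rightarrow> nat \<Rightarrow> (blk set \<Rightarrow> blk) \<Rightarrow> nat \<Rightarrow> nat \<Rightarrow> hst \<times> msg set" where
  "hist E \<Delta> tb v r = hrun \<Delta> tb (lead E) (active \<Delta> E v) (recv E v) v r"

text \<open>Basic messages / blocks / proposals gossiped by honest validators before round r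
  (the adversary may replay these).\<close>
definition honest_basic_before :: "exec \<Rightarrow> nat \<Rightarrow> nat \<Rightarrow> bmsg set" where
  "honest_basic_before E n r =
     \<Union> {content m | m u r'. r' < r \<and> honest_at E n u r' \<and> m \<in> sent E u r'}"

definition honest_blocks_before :: "exec \<Rightarrow> nat \<Rightarrow> nat \<Rightarrow> blk set" where
  "honest_blocks_before E n r = {b. \<exists>b'. Blk b' \<in> honest_basic_before E n r \<and> prefix b b'}"

text \<open>Unforgeability of signatures for messages sent by the adversary at round r.\<close>
definition auth_block :: "exec \<Rightarrow> nat \<Rightarrow> nat \<Rightarrow> nat \<Rightarrow> blk \<Rightarrow> bool" where
  "auth_block E n \<Delta> r b =
    (sorted_wrt (<) (map fst b) \<and>
     (\<forall>q s x. prefix (q @ [(s, x)]) b \<longrightarrow>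
        (lead E s \<in> adv_at E n r \<and> 3*\<Delta>*s \<le> r) \<or> q @ [(s, x)] \<in> honest_blocks_before E n r))"

fun auth_bmsg :: "exec \<Rightarrow> nat \<Rightarrow> nat \<Rightarrow> nat \<Rightarrow> bmsg \<Rightarrow> bool" where
  "auth_bmsg E n \<Delta> r (Blk b) = auth_block E n \<Delta> r b"
| "auth_bmsg E n \<Delta> r (Vt u s b) =
     ((u \<in> adv_at E n r \<and> 3*\<Delta>*s \<le> r) \<or> Vt u s b \<in> honest_basic_before E n r)"

fun auth_msg :: "exec \<Rightarrow> nat \<Rightarrow> nat \<Rightarrow> nat \<Rightarrow> msg \<Rightarrow> bool" where
  "auth_msg E n \<Delta> r (Basic m) = auth_bmsg E n \<Delta> r m"
| "auth_msg E n \<Delta> r (Prop b W) =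
     (finite W \<and> (\<forall>m \<in> insert (Blk b) W. auth_bmsg E n \<Delta> r m) \<and> b \<noteq> [] \<and>
      ((lead E (fst (last b)) \<in> adv_at E n r \<and> 3*\<Delta>*fst (last b) \<le> r) \<or>
       (\<exists>u r'. r' < r \<and> honest_at E n u r' \<and> Prop b W \<in> sent E u r')))"

text \<open>Valid execution of Goldfish (n validators, round length \<Delta>, tie-break tb), synchronous
  except during the TPA (t1,t2): messages gossiped by honest validators in a slot s with
  t1 < s < t2 carry no delivery guarantee.\<close>
definition valid_exec :: "nat \<Rightarrow> nat \<Rightarrow> (blk set \<Rightarrow> blk) \<Rightarrow> nat \<Rightarrow> nat \<Rightarrow> exec \<Rightarrow> bool" where
  "valid_exec n \<Delta> tb t1 t2 E =
    (0 < \<Delta> \<and> (\<forall>t. lead E t < n) \<and>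
     (\<forall>v r. \<not> v < n \<longrightarrow> sent E v r = {}) \<and>
     (\<forall>v r. honest_at E n v r \<longrightarrow> sent E v r = snd (hist E \<Delta> tb v r)) \<and>
     (\<forall>v r. v \<in> adv_at E n r \<longrightarrow> finite (sent E v r) \<and> (\<forall>m \<in> sent E v r. auth_msg E n \<Delta> r m)) \<and>
     (\<forall>v r. recv E v r \<subseteq> {m. \<exists>u r'. r' < r \<and> m \<in> sent E u r'}) \<and>
     (\<forall>u r m v r'. honest_at E n u r \<and> m \<in> sent E u r \<and>
        \<not> (t1 < r div (3*\<Delta>) \<and> r div (3*\<Delta>) < t2) \<and> v < n \<and> r + \<Delta> \<le> r' \<and> awake E v r'
        \<longrightarrow> (\<exists>r''. r < r'' \<and> r'' \<le> r' \<and> m \<in> recv E v r'')))"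

definition Hset :: "exec \<Rightarrow> nat \<Rightarrow> nat \<Rightarrow> nat \<Rightarrow> nat set" where
  "Hset E n \<Delta> t = {v. honest_at E n v (3*\<Delta>*t + \<Delta>) \<and> active \<Delta> E v (3*\<Delta>*t + \<Delta>)}"

definition Aset :: "exec \<Rightarrow> nat \<Rightarrow> nat \<Rightarrow> nat \<Rightarrow> nat set" where
  "Aset E n \<Delta> t = adv_at E n (3*\<Delta>*t + \<Delta>)"

definition Hi :: "exec \<Rightarrow> nat \<Rightarrow> nat \<Rightarrow> int \<Rightarrow> nat set" where
  "Hi E n \<Delta> i = (if i < 0 then {} else Hset E n \<Delta> (nat i))"

definition Hrange :: "exec \<Rightarrow> nat \<Rightarrow> nat \<Rightarrow> int \<Rightarrow> int \<Rightarrow> nat set" where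
  "Hrange E n \<Delta> lo hi = \<Union> {Hi E n \<Delta> i | i. lo \<le> i \<and> i \<le> hi}"

definition sleepy :: "exec \<Rightarrow> nat \<Rightarrow> nat \<Rightarrow> nat \<Rightarrow> nat \<Rightarrow> bool" where
  "sleepy E n \<Delta> \<tau> t =
    (card (Hi E n \<Delta> (int t - 1)) >
     card (Aset E n \<Delta> t \<union> (Hrange E n \<Delta> (int t - int \<tau>) (int t - 2) - Hi E n \<Delta> (int t - 1))))"

definition compliant :: "nat \<Rightarrow> nat \<Rightarrow> nat \<Rightarrow> nat \<Rightarrow> nat \<Rightarrow> nat \<Rightarrow> exec \<Rightarrow> bool" where
  "compliant n \<Delta> \<tau> \<pi> t1 t2 E =
    (t1 < t2 \<and> t2 - t1 \<le> \<pi> \<and>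
     (\<forall>t. 0 < t \<and> \<not> (t1 < t \<and> t \<le> t2) \<longrightarrow> sleepy E n \<Delta> \<tau> t) \<and>
     (\<forall>t. t1 < t \<and> t \<le> t2 + 1 \<longrightarrow>
        card (Hset E n \<Delta> t1 - Aset E n \<Delta> t) >
        card (Aset E n \<Delta> t \<union> (Hrange E n \<Delta> (int t - int \<tau>) (int t - 1) - Hset E n \<Delta> t1))) \<and>
     (\<forall>v \<in> Hset E n \<Delta> t1. awake E v (3*\<Delta>*t1 + 2*\<Delta>)))"

definition aware :: "exec \<Rightarrow> nat \<Rightarrow> nat \<Rightarrow> nat \<Rightarrow> nat \<Rightarrow> nat \<Rightarrow> nat \<Rightarrow> bool" where
  "aware E n \<Delta> t1 t2 v r =
    (honest_at E n v r \<and> active \<Delta> E v r \<and>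
     (t1 < r div (3*\<Delta>) \<and> r div (3*\<Delta>) \<le> t2 \<longrightarrow> v \<in> Hset E n \<Delta> t1))"

definition honest_proposal :: "exec \<Rightarrow> nat \<Rightarrow> nat \<Rightarrow> (blk set \<Rightarrow> blk) \<Rightarrow> nat \<Rightarrow> blk \<Rightarrow> bool" where
  "honest_proposal E n \<Delta> tb t b =
    (honest_at E n (lead E t) (3*\<Delta>*t) \<and> active \<Delta> E (lead E t) (3*\<Delta>*t) \<and>
     (\<exists>W. Prop b W \<in> snd (hist E \<Delta> tb (lead E t) (3*\<Delta>*t))))"

definition async_resilient_exec :: "nat \<Rightarrow> nat \<Rightarrow> (blk set \<Rightarrow> blk) \<Rightarrow> nat \<Rightarrow> nat \<Rightarrow> exec \<Rightarrow> bool" where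
  "async_resilient_exec n \<Delta> tb t1 t2 E =
    (\<forall>t b v r c. t \<le> t1 \<and> honest_proposal E n \<Delta> tb t b \<and> 3*\<Delta>*t + \<Delta> \<le> r \<and>
        aware E n \<Delta> t1 t2 v r \<and> hchain (fst (hist E \<Delta> tb v r)) = Some c \<longrightarrow> prefix b c)"

definition goldfish_async_resilient ::
    "nat \<Rightarrow> nat \<Rightarrow> (blk set \<Rightarrow> blk) \<Rightarrow> nat \<Rightarrow> nat \<Rightarrow> bool" where
  "goldfish_async_resilient n \<Delta> tb \<tau> \<pi> =
    (\<forall>E t1 t2. valid_exec n \<Delta> tb t1 t2 E \<and> compliant n \<Delta> \<tau> \<pi> t1 t2 E
        \<longrightarrow> async_resilient_exec n \<Delta> tb t1 t2 E)"

end

theory Submission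
  imports Defs
begin

text \<open>Among three validators, validator 0 is the proposer of every slot. It proposes [(0,0)]
  honestly in slot 0 and is corrupted right afterwards; at the start of slot 1 it releases a
  conflicting slot-0 block [(0,1)] together with a slot-1 vote for it. The TPA (0,2) swallows the
  slot-1 votes of the honest validators 1 and 2, so when validator 1 votes in slot 2, GHOST_eph,
  which only counts votes from slot 1 on, sees a single vote, for [(0,1)]: the honest slot-0
  proposal leaves the canonical chain of an aware validator. One adversary against two
  always-awake honest validators keeps the execution (\<tau>,\<pi>)-compliant for every \<pi> \<ge> 2.\<close>

section \<open>GHOST_eph on small views\<close>

lemma ghost_eph_two_leaves:
  assumes tb: "\<And>S. finite S \<Longrightarrow> S \<noteq> {} \<Longrightarrow> tb S \<in> S"
    and tree: "block_tree V = {[], [x], [y]}"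
    and heavier: "weight V t [x] < weight V t [y]" and "x \<noteq> y"
  shows "ghost_eph tb V t = [y]"
proof -
  have card: "card (block_tree V) = Suc (Suc (Suc 0))" using \<open>x \<noteq> y\<close> unfolding tree by simp
  have root: "children V [] = {[x], [y]}" and leaf: "children V [y] = {}"
    unfolding children_def tree by auto
  have "heaviest V t [] = {[y]}"
    using heavier unfolding heaviest_def root by auto
  then have "tb (heaviest V t []) = [y]" using tb[of "{[y]}"] by simp
  then show ?thesis unfolding ghost_eph_def card using root leaf
    by (simp only: ghost_walk.simps if_True if_False insert_not_empty simp_thms)
qed

lemma block_tree_of_leaves:
  assumes "\<And>b. Blk b \<in> V \<longleftrightarrow> b = [x] \<or> b = [y]"
  shows "block_tree V = {[], [x], [y]}"
proof -
  have singleton_prefix: "prefix b [z] \<longleftrightarrow> b = [] \<or> b = [z]" for b :: blk and z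
    by (cases b) auto
  have "{b. \<exists>b'. Blk b' \<in> V \<and> prefix b b'} = {b. prefix b [x] \<or> prefix b [y]}"
    unfolding assms by blast
  then show ?thesis unfolding block_tree_def singleton_prefix by auto
qed

lemma eph_votes_single_recent:
  assumes "Vt u s c \<in> V" "t \<le> Suc s"
    and "\<And>u' s' c'. Vt u' s' c' \<in> V \<Longrightarrow> t \<le> Suc s' \<or> u' = u \<Longrightarrow> (u', s', c') = (u, s, c)"
  shows "eph_votes V t = {(u, s, c)}"
proof -
  have "u \<notin> equivocators V"
    using assms(3) unfolding equivocators_def votes_def by blast
  then show ?thesis
    using assms unfolding eph_votes_def votes_def by blast
qed

lemma weight_single_recent:
  assumes "eph_votes V t = {(u, s, c)}"
  shows "weight V t b = (if prefix b c then 1 else 0)"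
proof -
  have "{(u', s', c'). (u', s', c') \<in> eph_votes V t \<and> prefix b c'}
          = (if prefix b c then {(u, s, c)} else {})"
    using assms by auto
  then show ?thesis unfolding weight_def by simp
qed

lemma ghost_eph_empty: "ghost_eph tb {} t = []"
proof -
  have "block_tree {} = {[]}" unfolding block_tree_def by simp
  moreover from this have "children {} [] = {}" unfolding children_def by simp
  ultimately show ?thesis unfolding ghost_eph_def by simp
qed

section \<open>Honest validators that do not propose\<close>

definition timely_proposals :: "nat \<Rightarrow> nat \<Rightarrow> msg set \<Rightarrow> msg set" where
  "timely_proposals \<Delta> r M =
     (if r mod (3 * \<Delta>) \<le> \<Delta> then {m \<in> M. is_prop_slot (r div (3 * \<Delta>)) m} else {})"

lemma hstep_non_leader:
  fixes \<Delta> r :: nat and M :: "msg set"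
  assumes "ld (r div (3*\<Delta>)) \<noteq> v"
  defines "P \<equiv> \<Union> (content ` timely_proposals \<Delta> r M)"
    and "B \<equiv> \<Union> (content ` (M - timely_proposals \<Delta> r M))"
  shows "hstep \<Delta> tb ld v True r M s =
    (if r mod (3*\<Delta>) = \<Delta> then
       (\<lparr>hview = hview s \<union> P, hbuf = hbuf s \<union> B,
         hchain = Some (ghost_eph tb (hview s \<union> P) (r div (3*\<Delta>)))\<rparr>,
        {Basic (Vt v (r div (3*\<Delta>)) (ghost_eph tb (hview s \<union> P) (r div (3*\<Delta>))))})
     else if r mod (3*\<Delta>) = 2*\<Delta> then
       (\<lparr>hview = hview s \<union> P \<union> (hbuf s \<union> B), hbuf = {}, hchain = hchain s\<rparr>, {})
     else (\<lparr>hview = hview s \<union> P, hbuf = hbuf s \<union> B, hchain = hchain s\<rparr>, {}))"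
  using assms unfolding hstep_def timely_proposals_def Let_def by simp

lemma content_timely_proposals_split:
  "\<Union> (content ` timely_proposals \<Delta> r M) \<union> \<Union> (content ` (M - timely_proposals \<Delta> r M))
     = \<Union> (content ` M)"
  unfolding timely_proposals_def by auto

lemma hstep_non_leader_view_buf:
  assumes "ld (r div (3*\<Delta>)) \<noteq> v"
  shows "hview (fst (hstep \<Delta> tb ld v True r M s)) \<union> hbuf (fst (hstep \<Delta> tb ld v True r M s))
           = hview s \<union> hbuf s \<union> \<Union> (content ` M)"
  using content_timely_proposals_split[of \<Delta> r M]
  unfolding hstep_non_leader[where ld=ld and r=r and \<Delta>=\<Delta> and v=v, OF assms] by auto

lemma hstep_non_leader_view_mono:
  assumes "ld (r div (3*\<Delta>)) \<noteq> v"
  shows "hview s \<subseteq> hview (fst (hstep \<Delta> tb ld v True r M s))"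
  unfolding hstep_non_leader[where ld=ld and r=r and \<Delta>=\<Delta> and v=v, OF assms] by auto

lemma hstep_non_leader_merge:
  assumes "ld (r div (3*\<Delta>)) \<noteq> v" "r mod (3*\<Delta>) = 2*\<Delta>" "0 < \<Delta>"
  shows "hview (fst (hstep \<Delta> tb ld v True r M s)) = hview s \<union> hbuf s \<union> \<Union> (content ` M)"
  using assms(2,3) content_timely_proposals_split[of \<Delta> r M]
  unfolding hstep_non_leader[where ld=ld and r=r and \<Delta>=\<Delta> and v=v, OF assms(1)] by auto

lemma hstep_non_leader_sends_votes:
  assumes "ld (r div (3*\<Delta>)) \<noteq> v"
  shows "snd (hstep \<Delta> tb ld v True r M s) \<subseteq> range (\<lambda>c. Basic (Vt v (r div (3*\<Delta>)) c))"
    and "r mod (3*\<Delta>) \<noteq> \<Delta> \<Longrightarrow> snd (hstep \<Delta> tb ld v True r M s) = {}"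
  unfolding hstep_non_leader[where ld=ld and r=r and \<Delta>=\<Delta> and v=v, OF assms] by auto

lemma hstep_non_leader_vote:
  assumes "ld (r div (3*\<Delta>)) \<noteq> v" "r mod (3*\<Delta>) = \<Delta>" "M \<subseteq> range Basic"
  shows "hchain (fst (hstep \<Delta> tb ld v True r M s)) = Some (ghost_eph tb (hview s) (r div (3*\<Delta>)))"
proof -
  have "timely_proposals \<Delta> r M = {}"
    using assms(3) unfolding timely_proposals_def is_prop_slot_def by auto
  then show ?thesis
    unfolding hstep_non_leader[where ld=ld and r=r and \<Delta>=\<Delta> and v=v, OF assms(1)]
    using assms(2) by simp
qed

section \<open>The attack execution\<close>

definition attack_msgs :: "nat \<Rightarrow> nat \<Rightarrow> msg set" where
  "attack_msgs \<Delta> r = (if r = 3*\<Delta> then {Basic (Blk [(0,1)]), Basic (Vt 0 1 [(0,1)])} else {})"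

text \<open>Everything gossiped at round r reaches every validator at round r + 1, except the
  messages of the honest validators 1 and 2 during slot 1, which are lost in the TPA (0,2).\<close>

definition delivered :: "nat \<Rightarrow> nat \<Rightarrow> (nat \<Rightarrow> hst \<times> msg set) \<Rightarrow> msg set" where
  "delivered \<Delta> r g = (if r = 0 then snd (g 0) else attack_msgs \<Delta> r) \<union>
     (if r div (3*\<Delta>) = 1 then {} else snd (g 1) \<union> snd (g 2))"

primrec attack_run :: "nat \<Rightarrow> (blk set \<Rightarrow> blk) \<Rightarrow> nat \<Rightarrow> nat \<Rightarrow> hst \<times> msg set" where
  "attack_run \<Delta> tb 0 = (\<lambda>v. hstep \<Delta> tb (\<lambda>_. 0) v True 0 {} hinit)"
| "attack_run \<Delta> tb (Suc r) =
     (\<lambda>v. hstep \<Delta> tb (\<lambda>_. 0) v True (Suc r) (delivered \<Delta> r (attack_run \<Delta> tb r))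
             (fst (attack_run \<Delta> tb r v)))"

definition attack_inbox :: "nat \<Rightarrow> (blk set \<Rightarrow> blk) \<Rightarrow> nat \<Rightarrow> msg set" where
  "attack_inbox \<Delta> tb r = (case r of 0 \<Rightarrow> {} | Suc r' \<Rightarrow> delivered \<Delta> r' (attack_run \<Delta> tb r'))"

definition attack_sent :: "nat \<Rightarrow> (blk set \<Rightarrow> blk) \<Rightarrow> nat \<Rightarrow> nat \<Rightarrow> msg set" where
  "attack_sent \<Delta> tb v r =
     (if v = 0 then (if r = 0 then snd (attack_run \<Delta> tb 0 0) else attack_msgs \<Delta> r)
      else if v < 3 then snd (attack_run \<Delta> tb r v) else {})"

definition attack_exec :: "nat \<Rightarrow> (blk set \<Rightarrow> blk) \<Rightarrow> exec" where
  "attack_exec \<Delta> tb =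
     \<lparr>lead = \<lambda>_. 0, corr = \<lambda>v. if v = 0 then Some 1 else None, awake = \<lambda>_ _. True,
      sent = attack_sent \<Delta> tb, recv = \<lambda>_. attack_inbox \<Delta> tb\<rparr>"

lemma attack_exec_simps [simp]:
  "lead (attack_exec \<Delta> tb) = (\<lambda>_. 0)" "awake (attack_exec \<Delta> tb) v r"
  "sent (attack_exec \<Delta> tb) = attack_sent \<Delta> tb" "recv (attack_exec \<Delta> tb) v = attack_inbox \<Delta> tb"
  unfolding attack_exec_def by simp_all

lemma attack_inbox_0 [simp]: "attack_inbox \<Delta> tb 0 = {}"
  and attack_inbox_Suc: "attack_inbox \<Delta> tb (Suc r) = delivered \<Delta> r (attack_run \<Delta> tb r)"
  unfolding attack_inbox_def by simp_all

lemma attack_run_Suc_inbox: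
  "attack_run \<Delta> tb (Suc r) v =
     hstep \<Delta> tb (\<lambda>_. 0) v True (Suc r) (attack_inbox \<Delta> tb (Suc r)) (fst (attack_run \<Delta> tb r v))"
  by (simp add: attack_inbox_Suc)

lemma active_attack_exec: "active \<Delta> (attack_exec \<Delta> tb) v r"
  unfolding active_def attack_exec_def by auto

lemma hist_attack_exec: "hist (attack_exec \<Delta> tb) \<Delta> tb v r = attack_run \<Delta> tb r v"
proof -
  have "active \<Delta> (attack_exec \<Delta> tb) v = (\<lambda>_. True)"
    by (simp add: fun_eq_iff active_attack_exec)
  then show ?thesis
    unfolding hist_def by (induction r) (simp_all add: attack_exec_def attack_inbox_Suc)
qed

lemma adv_at_attack_exec: "adv_at (attack_exec \<Delta> tb) 3 r = (if 1 \<le> r then {0} else {})"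
  unfolding adv_at_def attack_exec_def by auto

lemma honest_at_attack_exec:
  "honest_at (attack_exec \<Delta> tb) 3 v r \<longleftrightarrow> v < 3 \<and> (v = 0 \<longrightarrow> r = 0)"
  unfolding honest_at_def adv_at_attack_exec by auto

lemma attack_run_proposal:
  "0 < \<Delta> \<Longrightarrow> snd (attack_run \<Delta> tb 0 0) = {Prop [(0,0)] {Blk [(0,0)]}}"
  by (simp add: hstep_def Let_def ghost_eph_empty hinit_def)

lemma attack_run_sends_votes:
  assumes "v \<noteq> 0"
  shows "snd (attack_run \<Delta> tb r v) \<subseteq> range (\<lambda>c. Basic (Vt v (r div (3*\<Delta>)) c))"
    and "r mod (3*\<Delta>) \<noteq> \<Delta> \<Longrightarrow> snd (attack_run \<Delta> tb r v) = {}"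
  using hstep_non_leader_sends_votes[where ld="\<lambda>_. 0" and r=r and \<Delta>=\<Delta> and v=v] assms
  by (cases r; simp)+

section \<open>The view of validator 1 at its slot-2 vote\<close>

definition received :: "nat \<Rightarrow> (blk set \<Rightarrow> blk) \<Rightarrow> nat \<Rightarrow> bmsg set" where
  "received \<Delta> tb r = (\<Union>r'\<le>r. \<Union> (content ` attack_inbox \<Delta> tb r'))"

lemma received_0: "received \<Delta> tb 0 = {}"
  and received_Suc:
    "received \<Delta> tb (Suc r) = received \<Delta> tb r \<union> \<Union> (content ` attack_inbox \<Delta> tb (Suc r))"
  unfolding received_def by (auto simp: atMost_Suc)

lemma attack_run_view_buf:
  assumes "v \<noteq> 0"
  shows "hview (fst (attack_run \<Delta> tb r v)) \<union> hbuf (fst (attack_run \<Delta> tb r v)) = received \<Delta> tb r"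
proof (induction r)
  case 0
  then show ?case
    using hstep_non_leader_view_buf[where ld="\<lambda>_. 0" and r=0 and \<Delta>=\<Delta> and v=v] assms
    by (simp add: hinit_def received_0)
next
  case (Suc r)
  then show ?case
    using hstep_non_leader_view_buf[where ld="\<lambda>_. 0" and r="Suc r" and \<Delta>=\<Delta> and v=v] assms
    unfolding attack_run_Suc_inbox received_Suc by simp
qed

lemma attack_run_view_mono:
  assumes "v \<noteq> 0" "r \<le> r'"
  shows "hview (fst (attack_run \<Delta> tb r v)) \<subseteq> hview (fst (attack_run \<Delta> tb r' v))"
  using assms(2)
proof (induction r' rule: dec_induct)
  case (step r')
  then show ?case
    using hstep_non_leader_view_mono[where ld="\<lambda>_. 0" and r="Suc r'" and \<Delta>=\<Delta> and v=v] assms(1)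
    unfolding attack_run_Suc_inbox by blast
qed simp

lemma attack_run_view_merge:
  assumes "v \<noteq> 0" "r mod (3*\<Delta>) = 2*\<Delta>" "0 < \<Delta>"
  shows "hview (fst (attack_run \<Delta> tb r v)) = received \<Delta> tb r"
proof (cases r)
  case (Suc r0)
  have "hview (fst (attack_run \<Delta> tb (Suc r0) v))
          = received \<Delta> tb r0 \<union> \<Union> (content ` attack_inbox \<Delta> tb (Suc r0))"
    using hstep_non_leader_merge[where ld="\<lambda>_. 0" and r=r and \<Delta>=\<Delta> and v=v] assms Suc
      attack_run_view_buf[OF assms(1), of \<Delta> tb r0]
    unfolding attack_run_Suc_inbox by simp
  then show ?thesis unfolding Suc received_Suc .
qed (use assms in simp)

definition early_msgs :: "bmsg set" where
  "early_msgs = {Blk [(0,0)], Blk [(0,1)], Vt 0 1 [(0,1)]} \<union> {Vt u 0 c | u c. u \<noteq> 0}"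

lemma ghost_eph_early_view:
  assumes tb: "\<And>S. finite S \<Longrightarrow> S \<noteq> {} \<Longrightarrow> tb S \<in> S"
    and "{Blk [(0,0)], Blk [(0,1)], Vt 0 1 [(0,1)]} \<subseteq> V" and "V \<subseteq> early_msgs"
  shows "ghost_eph tb V 2 = [(0,1)]"
proof -
  have "block_tree V = {[], [(0,0)], [(0,1)]}"
    by (rule block_tree_of_leaves) (use assms in \<open>auto simp: early_msgs_def\<close>)
  moreover have "eph_votes V 2 = {(0, 1, [(0,1)])}"
    by (rule eph_votes_single_recent) (use assms in \<open>auto simp: early_msgs_def\<close>)
  then have "weight V 2 [(0,0)] < weight V 2 [(0,1)]" by (simp add: weight_single_recent)
  ultimately show ?thesis using ghost_eph_two_leaves[OF tb, where x="(0,0)" and y="(0,1)"] by simp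
qed

lemma vote_round_before_slot2:
  fixes \<Delta> r :: nat
  assumes "r < 7*\<Delta>" "r mod (3*\<Delta>) = \<Delta>"
  shows "r div (3*\<Delta>) \<le> 1"
proof -
  have "\<Delta> * (3 * (r div (3*\<Delta>))) + \<Delta> = r"
    using div_mult_mod_eq[of r "3*\<Delta>"] assms(2) by (simp add: algebra_simps)
  then have "\<Delta> * (3 * (r div (3*\<Delta>))) < \<Delta> * 6" using assms(1) by linarith
  then show ?thesis by simp
qed

lemma attack_inbox_early:
  assumes "0 < \<Delta>" "r < 7*\<Delta>" "m \<in> attack_inbox \<Delta> tb r"
  shows "content m \<subseteq> early_msgs"
proof -
  obtain r0 where r0: "r = Suc r0" using assms(3) by (cases r) simp_all
  have "m \<in> delivered \<Delta> r0 (attack_run \<Delta> tb r0)"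
    using assms(3) unfolding r0 attack_inbox_Suc .
  then consider (proposal) "r0 = 0" "m \<in> snd (attack_run \<Delta> tb r0 0)"
    | (adversary) "m \<in> attack_msgs \<Delta> r0"
    | (honest) u where "u \<in> {1, 2}" "r0 div (3*\<Delta>) \<noteq> 1" "m \<in> snd (attack_run \<Delta> tb r0 u)"
    unfolding delivered_def by (auto split: if_split_asm)
  then show ?thesis
  proof cases
    case proposal
    then show ?thesis using attack_run_proposal[OF assms(1), of tb] by (simp add: early_msgs_def)
  next
    case adversary
    then show ?thesis by (auto simp: attack_msgs_def early_msgs_def split: if_split_asm)
  next
    case (honest u)
    have "u \<noteq> 0" using honest(1) by auto
    have "r0 mod (3*\<Delta>) = \<Delta>"
    proof (rule ccontr)
      assume "r0 mod (3*\<Delta>) \<noteq> \<Delta>"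
      with attack_run_sends_votes(2)[OF \<open>u \<noteq> 0\<close>] have "snd (attack_run \<Delta> tb r0 u) = {}" .
      with honest(3) show False by simp
    qed
    with vote_round_before_slot2[of r0 \<Delta>] have "r0 div (3*\<Delta>) = 0"
      using honest(2) assms(2) r0 by simp
    then obtain c where "m = Basic (Vt u 0 c)"
      using attack_run_sends_votes(1)[OF \<open>u \<noteq> 0\<close>, of \<Delta> tb r0] honest(3) by auto
    then show ?thesis using \<open>u \<noteq> 0\<close> by (auto simp: early_msgs_def)
  qed
qed

lemma received_early:
  assumes "0 < \<Delta>" "r < 7*\<Delta>"
  shows "received \<Delta> tb r \<subseteq> early_msgs"
proof (unfold received_def, intro UN_least)
  fix r' m assume "r' \<in> {..r}" "m \<in> attack_inbox \<Delta> tb r'"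
  with assms(2) show "content m \<subseteq> early_msgs" by (intro attack_inbox_early[OF assms(1)]) auto
qed

lemma received_attack:
  assumes "0 < \<Delta>"
  shows "{Blk [(0,0)], Blk [(0,1)], Vt 0 1 [(0,1)]} \<subseteq> received \<Delta> tb (5*\<Delta>)"
proof -
  have "Blk [(0,0)] \<in> \<Union> (content ` attack_inbox \<Delta> tb (Suc 0))"
    using attack_run_proposal[OF assms] by (simp add: attack_inbox_Suc delivered_def)
  moreover have "{Blk [(0,1)], Vt 0 1 [(0,1)]} \<subseteq> \<Union> (content ` attack_inbox \<Delta> tb (Suc (3*\<Delta>)))"
    using assms by (simp add: attack_inbox_Suc delivered_def attack_msgs_def)
  moreover have "Suc 0 \<le> 5*\<Delta>" "Suc (3*\<Delta>) \<le> 5*\<Delta>" using assms by simp_all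
  ultimately show ?thesis unfolding received_def by blast
qed

lemma attack_run_chain_slot2:
  assumes tb: "\<And>S. finite S \<Longrightarrow> S \<noteq> {} \<Longrightarrow> tb S \<in> S" and "0 < \<Delta>"
  shows "hchain (fst (attack_run \<Delta> tb (7*\<Delta>) 1)) = Some [(0,1)]"
proof -
  define r0 where "r0 = 7*\<Delta> - 1"
  have r0: "7*\<Delta> = Suc r0" "r0 \<noteq> 0" "5*\<Delta> \<le> r0" "r0 < 7*\<Delta>"
    unfolding r0_def using assms(2) by simp_all
  define V where "V = hview (fst (attack_run \<Delta> tb r0 1))"
  have slot2: "(7*\<Delta>) mod (3*\<Delta>) = \<Delta>" "(7*\<Delta>) div (3*\<Delta>) = 2"
    using assms(2) by (simp_all add: mult.commute[of _ \<Delta>])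
  have "attack_inbox \<Delta> tb (7*\<Delta>) \<subseteq> range Basic"
    using attack_run_sends_votes(1)[of 1 \<Delta> tb r0] attack_run_sends_votes(1)[of 2 \<Delta> tb r0] r0(2)
    unfolding r0(1) attack_inbox_Suc delivered_def attack_msgs_def by auto
  then have "hchain (fst (attack_run \<Delta> tb (7*\<Delta>) 1)) = Some (ghost_eph tb V 2)"
    using hstep_non_leader_vote[where ld="\<lambda>_. 0" and r="7*\<Delta>" and \<Delta>=\<Delta> and v=1] slot2
    unfolding V_def r0(1) attack_run_Suc_inbox by simp
  moreover have "received \<Delta> tb (5*\<Delta>) \<subseteq> V"
  proof -
    have "(5*\<Delta>) mod (3*\<Delta>) = 2*\<Delta>" using assms(2) by (simp add: mult.commute[of _ \<Delta>])
    then show ?thesis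
      using attack_run_view_merge[of 1 "5*\<Delta>" \<Delta> tb] attack_run_view_mono[of 1 "5*\<Delta>" r0 \<Delta> tb]
        assms(2) r0(3) unfolding V_def by simp
  qed
  moreover have "V \<subseteq> early_msgs"
    using attack_run_view_buf[of 1 \<Delta> tb r0] received_early[OF assms(2) r0(4)]
    unfolding V_def by blast
  moreover have "{Blk [(0,0)], Blk [(0,1)], Vt 0 1 [(0,1)]} \<subseteq> V"
    using received_attack[OF assms(2), of tb] \<open>received \<Delta> tb (5*\<Delta>) \<subseteq> V\<close> by blast
  ultimately show ?thesis using ghost_eph_early_view[OF tb] by simp
qed

section \<open>Validity, compliance and the violation\<close>

lemma attack_sent_authentic:
  assumes "v \<in> adv_at (attack_exec \<Delta> tb) 3 r"
  shows "finite (sent (attack_exec \<Delta> tb) v r)"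
    and "m \<in> sent (attack_exec \<Delta> tb) v r \<Longrightarrow> auth_msg (attack_exec \<Delta> tb) 3 \<Delta> r m"
proof -
  have "v = 0" "1 \<le> r" using assms unfolding adv_at_attack_exec by (auto split: if_splits)
  then have sent: "sent (attack_exec \<Delta> tb) v r = attack_msgs \<Delta> r"
    by (simp add: attack_exec_def attack_sent_def)
  then show "finite (sent (attack_exec \<Delta> tb) v r)" by (simp add: attack_msgs_def)
  have "auth_block (attack_exec \<Delta> tb) 3 \<Delta> r [(0,1)]"
    using assms \<open>v = 0\<close> unfolding auth_block_def
    by (auto simp: attack_exec_def prefix_Cons Cons_eq_append_conv)
  moreover assume "m \<in> sent (attack_exec \<Delta> tb) v r"
  ultimately show "auth_msg (attack_exec \<Delta> tb) 3 \<Delta> r m"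
    using assms \<open>v = 0\<close> unfolding sent attack_msgs_def by (auto split: if_splits)
qed

lemma honest_sent_delivered:
  assumes "honest_at (attack_exec \<Delta> tb) 3 u r" "r div (3*\<Delta>) \<noteq> 1"
  shows "sent (attack_exec \<Delta> tb) u r \<subseteq> delivered \<Delta> r (attack_run \<Delta> tb r)"
proof -
  have "u = 0 \<and> r = 0 \<or> u = 1 \<or> u = 2" using assms(1) unfolding honest_at_attack_exec by auto
  then show ?thesis using assms(2) by (auto simp: attack_sent_def delivered_def)
qed

lemma valid_attack_exec:
  assumes "0 < \<Delta>"
  shows "valid_exec 3 \<Delta> tb 0 2 (attack_exec \<Delta> tb)"
  unfolding valid_exec_def
proof (intro conjI allI impI ballI)
  fix v r
  show "recv (attack_exec \<Delta> tb) v r \<subseteq> {m. \<exists>u r'. r' < r \<and> m \<in> sent (attack_exec \<Delta> tb) u r'}"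
  proof (cases r)
    case (Suc r0)
    have "delivered \<Delta> r0 (attack_run \<Delta> tb r0) \<subseteq> (\<Union>u. attack_sent \<Delta> tb u r0)"
      unfolding delivered_def attack_sent_def by (auto intro: exI[of _ 1] exI[of _ 2])
    then show ?thesis unfolding Suc by (simp add: attack_inbox_Suc) blast
  qed simp
next
  fix u r m v r'
  assume "honest_at (attack_exec \<Delta> tb) 3 u r \<and> m \<in> sent (attack_exec \<Delta> tb) u r \<and>
    \<not> (0 < r div (3*\<Delta>) \<and> r div (3*\<Delta>) < 2) \<and> v < 3 \<and> r + \<Delta> \<le> r' \<and> awake (attack_exec \<Delta> tb) v r'"
  then have "m \<in> recv (attack_exec \<Delta> tb) v (Suc r)" "Suc r \<le> r'"
    using honest_sent_delivered[of \<Delta> tb u r] assms by (auto simp: attack_inbox_Suc)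
  then show "\<exists>r''. r < r'' \<and> r'' \<le> r' \<and> m \<in> recv (attack_exec \<Delta> tb) v r''" by auto
qed (use assms attack_sent_authentic in \<open>auto simp: attack_sent_def hist_attack_exec
       honest_at_attack_exec\<close>)

lemma Hset_attack_exec: "0 < \<Delta> \<Longrightarrow> Hset (attack_exec \<Delta> tb) 3 \<Delta> t = {1, 2}"
  unfolding Hset_def honest_at_attack_exec using active_attack_exec by auto

lemma Aset_attack_exec: "0 < \<Delta> \<Longrightarrow> Aset (attack_exec \<Delta> tb) 3 \<Delta> t = {0}"
  unfolding Aset_def adv_at_attack_exec by simp

lemma Hrange_attack_exec: "0 < \<Delta> \<Longrightarrow> Hrange (attack_exec \<Delta> tb) 3 \<Delta> lo hi \<subseteq> {1, 2}"
  unfolding Hrange_def Hi_def using Hset_attack_exec by auto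

lemma compliant_attack_exec:
  assumes "0 < \<Delta>" "2 \<le> \<pi>"
  shows "compliant 3 \<Delta> \<tau> \<pi> 0 2 (attack_exec \<Delta> tb)"
proof -
  let ?E = "attack_exec \<Delta> tb"
  have stale: "Aset ?E 3 \<Delta> t \<union> (Hrange ?E 3 \<Delta> lo hi - {1, 2}) = {0}" for t lo hi
    using Hrange_attack_exec[OF assms(1)] Aset_attack_exec[OF assms(1)] by auto
  have "sleepy ?E 3 \<Delta> \<tau> t" if "0 < t" for t
  proof -
    have Hi: "Hi ?E 3 \<Delta> (int t - 1) = {1, 2}"
      using that Hset_attack_exec[OF assms(1)] by (simp add: Hi_def)
    show ?thesis unfolding sleepy_def Hi stale by simp
  qed
  moreover have "card (Aset ?E 3 \<Delta> t \<union> (Hrange ?E 3 \<Delta> lo hi - Hset ?E 3 \<Delta> 0))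
      < card (Hset ?E 3 \<Delta> 0 - Aset ?E 3 \<Delta> t)" for t lo hi
    unfolding Hset_attack_exec[OF assms(1)] stale by (simp add: Aset_attack_exec[OF assms(1)])
  ultimately show ?thesis using assms unfolding compliant_def by simp
qed

lemma not_async_resilient_attack_exec:
  assumes tb: "\<And>S. finite S \<Longrightarrow> S \<noteq> {} \<Longrightarrow> tb S \<in> S" and "0 < \<Delta>"
  shows "\<not> async_resilient_exec 3 \<Delta> tb 0 2 (attack_exec \<Delta> tb)"
proof -
  have "honest_proposal (attack_exec \<Delta> tb) 3 \<Delta> tb 0 [(0,0)]"
    unfolding honest_proposal_def hist_attack_exec
    using assms(2) active_attack_exec attack_run_proposal[OF assms(2)]
    by (simp add: honest_at_attack_exec)
  moreover have "(7*\<Delta>) div (3*\<Delta>) = 2"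
    using assms(2) by (simp add: mult.commute[of _ \<Delta>])
  then have "aware (attack_exec \<Delta> tb) 3 \<Delta> 0 2 1 (7*\<Delta>)"
    unfolding aware_def using assms(2) active_attack_exec Hset_attack_exec
    by (simp add: honest_at_attack_exec)
  moreover have "hchain (fst (hist (attack_exec \<Delta> tb) \<Delta> tb 1 (7*\<Delta>))) = Some [(0,1)]"
    unfolding hist_attack_exec by (rule attack_run_chain_slot2[OF tb assms(2)])
  moreover have "3*\<Delta>*0 + \<Delta> \<le> 7*\<Delta>" "\<not> prefix [(0::nat, 0::nat)] [(0, 1)]" by simp_all
  ultimately show ?thesis unfolding async_resilient_exec_def by blast
qed

theorem theorem4p4:
  fixes \<tau> \<pi> \<Delta> :: nat and tb :: "blk set \<Rightarrow> blk"
  assumes "2 \<le> \<pi>" and "\<pi> < \<tau>" and "0 < \<Delta>"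
    and "\<And>S. finite S \<Longrightarrow> S \<noteq> {} \<Longrightarrow> tb S \<in> S"
  shows "\<exists>n. \<not> goldfish_async_resilient n \<Delta> tb \<tau> \<pi>"
proof
  show "\<not> goldfish_async_resilient 3 \<Delta> tb \<tau> \<pi>"
    unfolding goldfish_async_resilient_def
    using valid_attack_exec[OF assms(3)] compliant_attack_exec[OF assms(3,1)]
      not_async_resilient_attack_exec[OF assms(4,3)] by blast
qed

end
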